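(* Let $k\ge 2$, $n\ge 1$, $x=\zeta_k$, and let $H\in\mathrm{BH}(kn+k,k)$ have the block form \[H=\begin{pmatrix} S & F_k\otimes j_n\\ F_k^{\ast}\otimes j_n^{\top} & A\end{pmatrix},\] where $S$ is a circulant matrix in $\mathrm{BH}(k,k)$ and $A$ is a $kn\times kn$ matrix. Let $R_1$ and $C_1$ be the sets of the first $k$ rows and first $k$ columns of $H$, respectively, and for some $0\le m\le k-1$ let $R_2$ and $C_2$ be the sets of the $n$ consecutive rows, respectively columns, of $H$ with indices $k+mn+1,\dots,k+mn+n$. Let $\omega\in\langle x\rangle\setminus\{1\}$. Then the matrix obtained from $H$ by multiplying every entry of the submatrix with rows $R_1$ and columns $C_2$ by $\omega$, and simultaneously every entry of the submatrix with rows $R_2$ and columns $C_1$ by $\overline{\omega}$ (all other entries unchanged), is again in $\mathrm{BH}(kn+k,k)$.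
   Context: $\zeta_k=e^{2\pi\sqrt{-1}/k}$ and $\langle\zeta_k\rangle$ is the group of $k$-th roots of unity. A complex Hadamard matrix of order $N$ is an $N\times N$ matrix with entries of modulus $1$ and $HH^{\ast}=NI_N$. $\mathrm{BH}(N,k)$ is the set of $N\times N$ complex Hadamard matrices with all entries in $\langle\zeta_k\rangle$. A circulant matrix $\mathrm{circ}(s_0,\dots,s_{k-1})$ has $(i,j)$ entry $s_{(j-i)\bmod k}$ ($0\le i,j\le k-1$). $F_k=[x^{(i-1)(j-1)}]_{1\le i,j\le k}$, $j_n$ is the all-ones row vector of length $n$, and $\otimes$ is the Kronecker product $A\otimes B=[a_{ij}B]$. *)

theory Defs
  imports Complex_Main
begin

text \<open>Square matrices of order N are represented as functions nat => nat => complex,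
  with 0-based indices i, j < N; entries outside this range are irrelevant.\<close>

definition zeta :: "nat \<Rightarrow> complex" where
  "zeta k = cis (2 * pi / real k)"

definition roots_grp :: "nat \<Rightarrow> complex set" where
  "roots_grp k = {zeta k ^ j | j. True}"

definition complex_hadamard :: "nat \<Rightarrow> (nat \<Rightarrow> nat \<Rightarrow> complex) \<Rightarrow> bool" where
  "complex_hadamard N H \<longleftrightarrow>
     (\<forall>i<N. \<forall>j<N. cmod (H i j) = 1) \<and>
     (\<forall>i<N. \<forall>l<N. (\<Sum>j<N. H i j * cnj (H l j)) = (if i = l then of_nat N else 0))"

definition BH :: "nat \<Rightarrow> nat \<Rightarrow> (nat \<Rightarrow> nat \<Rightarrow> complex) \<Rightarrow> bool" where
  "BH N k H \<longleftrightarrow> complex_hadamard N H \<and> (\<forall>i<N. \<forall>j<N. H i j \<in> roots_grp k)"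

definition circ :: "nat \<Rightarrow> (nat \<Rightarrow> complex) \<Rightarrow> nat \<Rightarrow> nat \<Rightarrow> complex" where
  "circ k s = (\<lambda>i j. s (nat ((int j - int i) mod int k)))"

end

theory Submission
  imports Defs "HOL-Analysis.Complex_Transcendental"
begin

(* Let l be a row of H in the a-th row block below S. Orthogonality of l to the first k rows,
   read through the circulant block S (which the Fourier matrix diagonalises), says that the
   Fourier transform of c \<mapsto> (sum of row l over the c-th column block) is a multiple of a
   single Fourier vector; by Fourier inversion these block sums vanish for c \<noteq> a.
   Rows of the twisted matrix have the same inner products as those of H up to unimodular
   factors on the first k columns and on the m-th column block. For a top row against a row
   of block a, either a \<noteq> m and the m-th column block contributes 0, or a = m, the other
   column blocks contribute 0, and both modified parts are scaled by the same factor \<omega>.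
   Rows of different lower blocks are already orthogonal on the first k columns, and in all
   remaining cases the factors are 1 or \<omega> * cnj \<omega> = 1. *)

lemma zeta_pow_eq_exp: "zeta k ^ p = exp (2 * of_real pi * \<i> * of_nat p / of_nat k)"
  by (simp add: zeta_def cis_conv_exp field_simps flip: exp_of_nat_mult)

lemma zeta_pow_eq_iff: "0 < k \<Longrightarrow> zeta k ^ p = zeta k ^ q \<longleftrightarrow> p mod k = q mod k"
  unfolding zeta_pow_eq_exp by (rule complex_root_unity_eq) simp

lemma norm_zeta_pow [simp]: "cmod (zeta k ^ p) = 1"
  by (simp add: zeta_def norm_power)

lemma unimodular_mult_cnj: "cmod z = 1 \<Longrightarrow> z * cnj z = 1"
  by (metis complex_norm_square of_real_1 power_one)

lemma zeta_pow_mult_cnj: "zeta k ^ p * cnj (zeta k ^ p) = 1"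
  by (rule unimodular_mult_cnj) simp

lemma sum_zeta_pow_orthogonal:
  assumes "0 < k" "p < k" "q < k"
  shows "(\<Sum>i<k. zeta k ^ (i * q) * cnj (zeta k ^ (i * p))) = (if p = q then of_nat k else 0)"
proof -
  define r where "r = zeta k ^ q * cnj (zeta k ^ p)"
  have r_pow: "zeta k ^ (i * q) * cnj (zeta k ^ (i * p)) = r ^ i" for i
    by (simp add: r_def power_mult_distrib power_mult mult.commute[of i])
  have "zeta k ^ k = 1"
    using zeta_pow_eq_iff[OF \<open>0 < k\<close>, of k 0] by simp
  moreover have "r ^ k = (zeta k ^ k) ^ q * cnj ((zeta k ^ k) ^ p)"
    unfolding r_def power_mult_distrib complex_cnj_power power_mult[symmetric]
    by (simp add: mult.commute)
  ultimately have "r ^ k = 1"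
    by simp
  moreover have "r = 1 \<longleftrightarrow> p = q"
  proof
    assume "r = 1"
    then have "zeta k ^ q = zeta k ^ p"
      by (metis r_def mult.assoc mult.commute mult_1 zeta_pow_mult_cnj)
    then show "p = q"
      using assms zeta_pow_eq_iff by simp
  qed (simp only: r_def zeta_pow_mult_cnj)
  ultimately show ?thesis
    unfolding r_pow by (simp add: sum_gp_strict)
qed

lemma sum_zeta_pow_inversion:
  assumes "0 < k" "c < k"
  shows "(\<Sum>i<k. zeta k ^ (i * c) * (\<Sum>c'<k. cnj (zeta k ^ (i * c')) * T c')) = of_nat k * T c"
proof -
  have "(\<Sum>i<k. zeta k ^ (i * c) * (\<Sum>c'<k. cnj (zeta k ^ (i * c')) * T c'))
      = (\<Sum>c'<k. (\<Sum>i<k. zeta k ^ (i * c) * cnj (zeta k ^ (i * c'))) * T c')"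
    unfolding sum_distrib_left sum_distrib_right by (subst sum.swap) (simp add: mult_ac)
  also have "\<dots> = (\<Sum>c'<k. if c' = c then of_nat k * T c' else 0)"
    using assms by (intro sum.cong refl, subst sum_zeta_pow_orthogonal) auto
  finally show ?thesis
    using assms by simp
qed

lemma roots_grp_mult: "x \<in> roots_grp k \<Longrightarrow> y \<in> roots_grp k \<Longrightarrow> x * y \<in> roots_grp k"
  unfolding roots_grp_def by (auto simp flip: power_add)

lemma roots_grp_cnj:
  assumes "0 < k" "x \<in> roots_grp k"
  shows "cnj x \<in> roots_grp k"
proof -
  obtain p where x: "x = zeta k ^ p"
    using assms(2) unfolding roots_grp_def by blast
  have "zeta k ^ p * zeta k ^ (p * (k - 1)) = zeta k ^ (p * k)"
    using assms(1) by (simp flip: power_add) (simp add: algebra_simps)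
  also have "\<dots> = 1"
    using zeta_pow_eq_iff[OF assms(1), of "p * k" 0] by simp
  finally have "cnj x = zeta k ^ (p * (k - 1))"
    unfolding x by (metis mult.assoc mult.commute mult_1 zeta_pow_mult_cnj)
  then show ?thesis
    unfolding roots_grp_def by blast
qed

lemma norm_roots_grp: "x \<in> roots_grp k \<Longrightarrow> cmod x = 1"
  unfolding roots_grp_def by auto

lemma sum_zeta_pow_circ:
  assumes "0 < k"
  shows "(\<Sum>j<k. zeta k ^ (j * a) * circ k s i j) = zeta k ^ (i * a) * (\<Sum>t<k. zeta k ^ (t * a) * s t)"
proof -
  define d where "d j = nat ((int j - int i) mod int k)" for j
  have d_lt: "d j < k" for j
    using assms by (simp add: d_def nat_less_iff)
  have d_mod: "(i + d j) mod k = j mod k" for j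
  proof -
    have "int ((i + d j) mod k) = (int i + (int j - int i) mod int k) mod int k"
      using assms by (simp add: d_def zmod_int)
    also have "\<dots> = int (j mod k)"
      by (simp add: mod_add_right_eq zmod_int)
    finally show ?thesis
      by simp
  qed
  have "inj_on d {..<k}"
    by (rule inj_onI) (metis d_mod lessThan_iff mod_less)
  moreover have "d ` {..<k} \<subseteq> {..<k}"
    using d_lt by auto
  ultimately have bij: "bij_betw d {..<k} {..<k}"
    by (simp add: bij_betw_def endo_inj_surj)
  have zeta_shift: "zeta k ^ (j * a) = zeta k ^ (i * a) * zeta k ^ (d j * a)" for j
  proof -
    have "(j * a) mod k = ((i + d j) * a) mod k"
      by (metis d_mod mod_mult_left_eq)
    then have "zeta k ^ (j * a) = zeta k ^ ((i + d j) * a)"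
      using zeta_pow_eq_iff[OF assms] by blast
    then show ?thesis
      by (simp add: add_mult_distrib power_add)
  qed
  have "(\<Sum>j<k. zeta k ^ (j * a) * circ k s i j)
      = zeta k ^ (i * a) * (\<Sum>j<k. zeta k ^ (d j * a) * s (d j))"
    unfolding sum_distrib_left
  proof (rule sum.cong[OF refl])
    fix j
    show "zeta k ^ (j * a) * circ k s i j = zeta k ^ (i * a) * (zeta k ^ (d j * a) * s (d j))"
      unfolding zeta_shift[of j] circ_def d_def by (simp only: mult.assoc)
  qed
  also have "(\<Sum>j<k. zeta k ^ (d j * a) * s (d j)) = (\<Sum>t<k. zeta k ^ (t * a) * s t)"
    using sum.reindex_bij_betw[OF bij, of "\<lambda>t. zeta k ^ (t * a) * s t"] by simp
  finally show ?thesis .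
qed

lemma sum_lessThan_add: "(\<Sum>j<a + b::nat. f j) = (\<Sum>j<a. f j) + (\<Sum>j<b. f (a + j))"
  by (induction b) (simp_all add: ac_simps)

lemma sum_lessThan_mult: "(\<Sum>j<c * n::nat. f j) = (\<Sum>i<c. \<Sum>b<n. f (i * n + b))"
  by (induction c) (simp_all add: sum_lessThan_add add.commute[of n])

lemma sum_lessThan_blocks:
  "(\<Sum>j<k * n + k::nat. f j) = (\<Sum>j<k. f j) + (\<Sum>c<k. \<Sum>b<n. f (k + c * n + b))"
  by (simp add: add.commute[of "k * n"] sum_lessThan_add sum_lessThan_mult add.assoc)

lemma sum_lessThan_blocks_at:
  assumes "m < k"
  shows "(\<Sum>j<k * n + k::nat. f j) = (\<Sum>j<k. f j) + (\<Sum>b<n. f (k + m * n + b))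
           + (\<Sum>c\<in>{..<k} - {m}. \<Sum>b<n. f (k + c * n + b))"
  using assms by (simp add: sum_lessThan_blocks sum.remove[of "{..<k}" m] add.assoc)

lemma block_index_iff:
  fixes a b m n :: nat
  assumes "b < n"
  shows "k + m * n \<le> k + a * n + b \<and> k + a * n + b < k + m * n + n \<longleftrightarrow> a = m"
proof
  assume in_block: "k + m * n \<le> k + a * n + b \<and> k + a * n + b < k + m * n + n"
  show "a = m"
  proof (rule ccontr)
    assume "a \<noteq> m"
    then have "Suc a \<le> m \<or> Suc m \<le> a"
      by linarith
    then have "Suc a * n \<le> m * n \<or> Suc m * n \<le> a * n"
      using mult_le_mono1 by blast
    then show False
      using in_block assms by auto
  qed
qed (use assms in auto)

lemma block_index_cases:
  fixes i k n :: nat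
  assumes "k \<le> i" "i < k * n + k"
  obtains a b where "a < k" "b < n" "i = k + a * n + b"
proof
  have "i - k < k * n"
    using assms by simp
  then show "(i - k) div n < k"
    by (simp add: less_mult_imp_div_less)
  show "(i - k) mod n < n"
    using assms by (cases "n = 0") auto
  show "i = k + (i - k) div n * n + (i - k) mod n"
    using assms by simp
qed

definition twist ::
    "nat \<Rightarrow> nat \<Rightarrow> nat \<Rightarrow> complex \<Rightarrow> (nat \<Rightarrow> nat \<Rightarrow> complex) \<Rightarrow> nat \<Rightarrow> nat \<Rightarrow> complex"
  where "twist k n m \<omega> H =
    (\<lambda>i j. if i < k \<and> k + m * n \<le> j \<and> j < k + m * n + n then \<omega> * H i j
           else if k + m * n \<le> i \<and> i < k + m * n + n \<and> j < k then cnj \<omega> * H i j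
           else H i j)"

lemma sum_twist_rows:
  fixes k n m :: nat and \<omega> :: complex and H :: "nat \<Rightarrow> nat \<Rightarrow> complex"
  assumes "m < k"
  defines "u \<equiv> \<lambda>i. if k + m * n \<le> i \<and> i < k + m * n + n then cnj \<omega> else 1"
    and "v \<equiv> \<lambda>i. if i < k then \<omega> else 1"
  shows "(\<Sum>j<k * n + k. twist k n m \<omega> H i j * cnj (twist k n m \<omega> H l j))
    = u i * cnj (u l) * (\<Sum>j<k. H i j * cnj (H l j))
      + v i * cnj (v l) * (\<Sum>b<n. H i (k + m * n + b) * cnj (H l (k + m * n + b)))
      + (\<Sum>c\<in>{..<k} - {m}. \<Sum>b<n. H i (k + c * n + b) * cnj (H l (k + c * n + b)))"
proof -
  have left: "twist k n m \<omega> H i j = u i * H i j" if "j < k" for i j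
    using that by (simp add: twist_def u_def)
  have block_m: "twist k n m \<omega> H i (k + m * n + b) = v i * H i (k + m * n + b)" if "b < n" for i b
    using that by (simp add: twist_def v_def)
  have block_other: "twist k n m \<omega> H i (k + c * n + b) = H i (k + c * n + b)"
    if "b < n" "c \<noteq> m" for i b c
    using that block_index_iff[OF that(1), of k m c] by (auto simp: twist_def)
  show ?thesis
    unfolding sum_lessThan_blocks_at[OF assms(1)]
    by (simp add: left block_m block_other sum_distrib_left mult_ac)
qed

locale circulant_fourier_BH =
  fixes k n :: nat and H :: "nat \<Rightarrow> nat \<Rightarrow> complex" and s :: "nat \<Rightarrow> complex"
  assumes k_pos: "0 < k"
    and BH_H: "BH (k * n + k) k H"
    and top_left: "\<And>i j. i < k \<Longrightarrow> j < k \<Longrightarrow> H i j = circ k s i j"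
    and top_right: "\<And>i a b. i < k \<Longrightarrow> a < k \<Longrightarrow> b < n \<Longrightarrow> H i (k + a * n + b) = zeta k ^ (i * a)"
    and bottom_left:
      "\<And>a b j. a < k \<Longrightarrow> b < n \<Longrightarrow> j < k \<Longrightarrow> H (k + a * n + b) j = cnj (zeta k ^ (j * a))"
begin

lemma rows_orthogonal:
  "i < k * n + k \<Longrightarrow> l < k * n + k \<Longrightarrow>
     (\<Sum>j<k * n + k. H i j * cnj (H l j)) = (if i = l then of_nat (k * n + k) else 0)"
  using BH_H unfolding BH_def complex_hadamard_def by blast

lemma entry_in_roots_grp: "i < k * n + k \<Longrightarrow> j < k * n + k \<Longrightarrow> H i j \<in> roots_grp k"
  using BH_H unfolding BH_def by blast

lemma bottom_row_index_lt:
  assumes "a < k" "b < n"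
  shows "k + a * n + b < k * n + k"
proof -
  have "a * n + b < Suc a * n"
    using assms by simp
  also have "\<dots> \<le> k * n"
    using assms by (intro mult_le_mono1) simp
  finally show ?thesis
    by simp
qed

lemma bottom_row_block_sum_eq_0:
  assumes "a < k" "b' < n" "c < k" "c \<noteq> a"
  shows "(\<Sum>b<n. H (k + a * n + b') (k + c * n + b)) = 0"
proof -
  define l where "l = k + a * n + b'"
  define T where "T c' = (\<Sum>b<n. H l (k + c' * n + b))" for c'
  define eig where "eig = (\<Sum>t<k. zeta k ^ (t * a) * s t)"
  have fourier_T: "(\<Sum>c'<k. cnj (zeta k ^ (i * c')) * T c') = - cnj (zeta k ^ (i * a) * eig)"
    if "i < k" for i
  proof -
    have "0 = (\<Sum>j<k * n + k. H l j * cnj (H i j))"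
      using rows_orthogonal[of l i] bottom_row_index_lt[OF assms(1,2)] that by (simp add: l_def)
    also have "\<dots> = (\<Sum>j<k. H l j * cnj (H i j))
                   + (\<Sum>c'<k. \<Sum>b<n. H l (k + c' * n + b) * cnj (H i (k + c' * n + b)))"
      by (rule sum_lessThan_blocks)
    also have "(\<Sum>j<k. H l j * cnj (H i j)) = cnj (\<Sum>j<k. zeta k ^ (j * a) * circ k s i j)"
      using assms that by (simp add: l_def top_left bottom_left cnj_sum)
    also have "\<dots> = cnj (zeta k ^ (i * a) * eig)"
      by (simp only: sum_zeta_pow_circ[OF k_pos] eig_def)
    also have "(\<Sum>c'<k. \<Sum>b<n. H l (k + c' * n + b) * cnj (H i (k + c' * n + b)))
             = (\<Sum>c'<k. cnj (zeta k ^ (i * c')) * T c')"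
      using that by (simp add: T_def top_right sum_distrib_left mult.commute)
    finally show ?thesis
      by (simp add: eq_neg_iff_add_eq_0 add.commute)
  qed
  have "of_nat k * T c = (\<Sum>i<k. zeta k ^ (i * c) * (\<Sum>c'<k. cnj (zeta k ^ (i * c')) * T c'))"
    using sum_zeta_pow_inversion[OF k_pos assms(3)] by simp
  also have "\<dots> = (\<Sum>i<k. zeta k ^ (i * c) * - cnj (zeta k ^ (i * a) * eig))"
    using fourier_T by (intro sum.cong refl) simp
  also have "\<dots> = - cnj eig * (\<Sum>i<k. zeta k ^ (i * c) * cnj (zeta k ^ (i * a)))"
    by (simp add: sum_distrib_left mult_ac)
  also have "\<dots> = 0"
    using sum_zeta_pow_orthogonal[OF k_pos assms(1,3)] assms(4) by simp
  finally show ?thesis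
    using k_pos by (simp add: T_def l_def)
qed

lemma top_bottom_block_inner_eq_0:
  assumes "i < k" "a < k" "b' < n" "c < k" "c \<noteq> a"
  shows "(\<Sum>b<n. H i (k + c * n + b) * cnj (H (k + a * n + b') (k + c * n + b))) = 0"
proof -
  have "(\<Sum>b<n. H i (k + c * n + b) * cnj (H (k + a * n + b') (k + c * n + b)))
      = zeta k ^ (i * c) * cnj (\<Sum>b<n. H (k + a * n + b') (k + c * n + b))"
    using assms by (simp add: top_right sum_distrib_left cnj_sum)
  then show ?thesis
    using bottom_row_block_sum_eq_0[OF assms(2-5)] by simp
qed

lemma bottom_rows_left_inner_eq_0:
  assumes "a < k" "a' < k" "a \<noteq> a'" "b < n" "b' < n"
  shows "(\<Sum>j<k. H (k + a * n + b) j * cnj (H (k + a' * n + b') j)) = 0"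
proof -
  have "(\<Sum>j<k. H (k + a * n + b) j * cnj (H (k + a' * n + b') j))
      = (\<Sum>j<k. zeta k ^ (j * a') * cnj (zeta k ^ (j * a)))"
    using assms by (intro sum.cong refl) (simp add: bottom_left mult.commute)
  also have "\<dots> = 0"
    using sum_zeta_pow_orthogonal[OF k_pos assms(1,2)] assms(3) by simp
  finally show ?thesis .
qed

end

locale circulant_fourier_BH_twist = circulant_fourier_BH +
  fixes m :: nat and \<omega> :: complex
  assumes m_lt: "m < k" and \<omega>_root: "\<omega> \<in> roots_grp k"
begin

abbreviation H' :: "nat \<Rightarrow> nat \<Rightarrow> complex" where "H' \<equiv> twist k n m \<omega> H"

lemma \<omega>_mult_cnj: "\<omega> * cnj \<omega> = 1"
  by (rule unimodular_mult_cnj[OF norm_roots_grp[OF \<omega>_root]])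

lemma twist_top_bottom_inner_eq_0:
  assumes "i < k" "a < k" "b' < n"
  shows "(\<Sum>j<k * n + k. H' i j * cnj (H' (k + a * n + b') j)) = 0"
proof -
  define l where "l = k + a * n + b'"
  define P1 where "P1 = (\<Sum>j<k. H i j * cnj (H l j))"
  define P2 where "P2 = (\<Sum>b<n. H i (k + m * n + b) * cnj (H l (k + m * n + b)))"
  define P3 where "P3 = (\<Sum>c\<in>{..<k} - {m}. \<Sum>b<n. H i (k + c * n + b) * cnj (H l (k + c * n + b)))"
  have "0 = (\<Sum>j<k * n + k. H i j * cnj (H l j))"
    using rows_orthogonal[of i l] bottom_row_index_lt assms by (simp add: l_def)
  also have "\<dots> = P1 + P2 + P3"
    unfolding P1_def P2_def P3_def by (rule sum_lessThan_blocks_at[OF m_lt])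
  finally have "P1 + P2 + P3 = 0" ..
  moreover have "(\<Sum>j<k * n + k. H' i j * cnj (H' l j))
      = (if a = m then \<omega> else 1) * P1 + \<omega> * P2 + P3"
    using sum_twist_rows[OF m_lt, where n = n and \<omega> = \<omega> and H = H and i = i and l = l]
      block_index_iff[OF assms(3), of k m a] assms
    by (simp add: l_def P1_def P2_def P3_def)
  moreover have "P3 = 0" if "a = m"
    unfolding P3_def l_def
    by (rule sum.neutral) (use top_bottom_block_inner_eq_0 assms that in auto)
  moreover have "P2 = 0" if "a \<noteq> m"
    unfolding P2_def l_def using top_bottom_block_inner_eq_0 assms that m_lt by simp
  ultimately show ?thesis
    unfolding l_def by (cases "a = m") (simp_all add: distrib_left[symmetric])
qed

lemma twist_top_rows_inner:
  assumes "i < k" "l < k"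
  shows "(\<Sum>j<k * n + k. H' i j * cnj (H' l j)) = (\<Sum>j<k * n + k. H i j * cnj (H l j))"
  using sum_twist_rows[OF m_lt, where n = n and \<omega> = \<omega> and H = H and i = i and l = l]
    sum_lessThan_blocks_at[OF m_lt, where n = n and f = "\<lambda>j. H i j * cnj (H l j)"] assms \<omega>_mult_cnj
  by simp

lemma twist_bottom_rows_inner:
  assumes "a < k" "b < n" "a' < k" "b' < n"
  shows "(\<Sum>j<k * n + k. H' (k + a * n + b) j * cnj (H' (k + a' * n + b') j))
       = (\<Sum>j<k * n + k. H (k + a * n + b) j * cnj (H (k + a' * n + b') j))"
proof (cases "a = a'")
  case True
  then show ?thesis
    using sum_twist_rows[OF m_lt, where n = n and \<omega> = \<omega> and H = H and i = "k + a * n + b"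
        and l = "k + a' * n + b'"]
      sum_lessThan_blocks_at[OF m_lt, where n = n
        and f = "\<lambda>j. H (k + a * n + b) j * cnj (H (k + a' * n + b') j)"]
      block_index_iff[OF assms(2), of k m a] block_index_iff[OF assms(4), of k m a'] \<omega>_mult_cnj
    by (simp add: mult.commute)
next
  case False
  then show ?thesis
    using sum_twist_rows[OF m_lt, where n = n and \<omega> = \<omega> and H = H and i = "k + a * n + b"
        and l = "k + a' * n + b'"]
      sum_lessThan_blocks_at[OF m_lt, where n = n
        and f = "\<lambda>j. H (k + a * n + b) j * cnj (H (k + a' * n + b') j)"]
      bottom_rows_left_inner_eq_0[OF assms(1,3) False assms(2,4)]
    by simp
qed

lemma twist_rows_inner:
  assumes "i < k * n + k" "l < k * n + k"
  shows "(\<Sum>j<k * n + k. H' i j * cnj (H' l j)) = (\<Sum>j<k * n + k. H i j * cnj (H l j))"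
proof -
  have bottom_top: "(\<Sum>j<k * n + k. H' (k + a * n + b) j * cnj (H' l j)) = 0"
    if "l < k" "a < k" "b < n" for l a b
    using arg_cong[OF twist_top_bottom_inner_eq_0[OF that], of cnj]
    by (simp add: cnj_sum mult.commute)
  show ?thesis
  proof (cases "i < k"; cases "l < k")
    assume "i < k" "l < k"
    then show ?thesis
      by (rule twist_top_rows_inner)
  next
    assume "i < k" "\<not> l < k"
    then obtain a b where l: "a < k" "b < n" "l = k + a * n + b"
      using block_index_cases assms(2) by (metis not_less)
    then show ?thesis
      using twist_top_bottom_inner_eq_0[OF \<open>i < k\<close> l(1,2)] rows_orthogonal[OF assms] \<open>i < k\<close>
      by simp
  next
    assume "\<not> i < k" "l < k"
    then obtain a b where i: "a < k" "b < n" "i = k + a * n + b"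
      using block_index_cases assms(1) by (metis not_less)
    then show ?thesis
      using bottom_top[OF \<open>l < k\<close> i(1,2)] rows_orthogonal[OF assms] \<open>l < k\<close>
      by simp
  next
    assume "\<not> i < k" "\<not> l < k"
    then obtain a b a' b'
      where "a < k" "b < n" "i = k + a * n + b" "a' < k" "b' < n" "l = k + a' * n + b'"
      using block_index_cases assms by (metis not_less)
    then show ?thesis
      using twist_bottom_rows_inner by simp
  qed
qed

lemma BH_twist: "BH (k * n + k) k H'"
proof -
  have roots: "H' i j \<in> roots_grp k" if "i < k * n + k" "j < k * n + k" for i j
    using entry_in_roots_grp[OF that] \<omega>_root roots_grp_cnj[OF k_pos \<omega>_root]
    by (simp add: twist_def roots_grp_mult)
  then show ?thesis
    unfolding BH_def complex_hadamard_def
    by (auto simp: twist_rows_inner rows_orthogonal intro: norm_roots_grp)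
qed

end

theorem corollary5p4:
  fixes k n m :: nat and H :: "nat \<Rightarrow> nat \<Rightarrow> complex" and s :: "nat \<Rightarrow> complex"
    and \<omega> :: complex
  assumes k2: "k \<ge> 2" and n1: "n \<ge> 1"
    and HBH: "BH (k * n + k) k H"
    and S_circ: "\<forall>i<k. \<forall>j<k. H i j = circ k s i j"
    and S_BH: "BH k k (circ k s)"
    and top_right: "\<forall>i<k. \<forall>a<k. \<forall>b<n. H i (k + a * n + b) = zeta k ^ (i * a)"
    and bottom_left: "\<forall>a<k. \<forall>b<n. \<forall>j<k. H (k + a * n + b) j = cnj (zeta k ^ (j * a))"
    and m_lt: "m < k"
    and \<omega>_in: "\<omega> \<in> roots_grp k - {1}"
  shows "BH (k * n + k) k
           (\<lambda>i j. if i < k \<and> k + m * n \<le> j \<and> j < k + m * n + n then \<omega> * H i j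
                  else if k + m * n \<le> i \<and> i < k + m * n + n \<and> j < k then cnj \<omega> * H i j
                  else H i j)"
proof -
  interpret circulant_fourier_BH_twist k n H s m \<omega>
    using k2 HBH S_circ top_right bottom_left m_lt \<omega>_in by unfold_locales auto
  show ?thesis
    using BH_twist unfolding twist_def .
qed

end
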